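(* Let $A$ be a C*-algebra and let $S\subseteq A$ be $A$-invariant, i.e. $[SA]=[AS]$. Then $$\mathrm{Ann}^L_A(S)=\mathrm{Ann}^R_A(S)=\mathrm{Ann}^L_A(\langle S\rangle_A)=\mathrm{Ann}^R_A(\langle S\rangle_A).$$
   Context: For subsets $S,T$ of a C*-algebra $A$: $[S]$ denotes the closed linear span of $S$; $ST=\{st:s\in S,t\in T\}$; $\langle S\rangle_A=[ASA]$ is the closed two-sided ideal generated by $S$. The left annihilator is $\mathrm{Ann}^L_A(S)=\{x\in A: xs=0\ \forall s\in S\}$ and the right annihilator is $\mathrm{Ann}^R_A(S)=\{x\in A: sx=0\ \forall s\in S\}$. A subset $S\subseteq A$ is called $A$-invariant if $[SA]=[AS]$. *)

theory Defs
  imports "HOL-Analysis.Analysis"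
begin

class cstar_algebra = real_normed_algebra + banach +
  fixes scaleC :: "complex \<Rightarrow> 'a \<Rightarrow> 'a"
    and cstar :: "'a \<Rightarrow> 'a"
  assumes scaleC_add_right: "scaleC a (x + y) = scaleC a x + scaleC a y"
    and scaleC_add_left: "scaleC (a + b) x = scaleC a x + scaleC b x"
    and scaleC_scaleC: "scaleC a (scaleC b x) = scaleC (a * b) x"
    and scaleC_one: "scaleC 1 x = x"
    and scaleR_scaleC: "scaleR r x = scaleC (complex_of_real r) x"
    and norm_scaleC: "norm (scaleC a x) = cmod a * norm x"
    and mult_scaleC_left: "scaleC a x * y = scaleC a (x * y)"
    and mult_scaleC_right: "x * scaleC a y = scaleC a (x * y)"
    and cstar_cstar: "cstar (cstar x) = x"
    and cstar_add: "cstar (x + y) = cstar x + cstar y"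
    and cstar_scaleC: "cstar (scaleC a x) = scaleC (cnj a) (cstar x)"
    and cstar_mult: "cstar (x * y) = cstar y * cstar x"
    and cstar_identity: "norm (cstar x * x) = (norm x)^2"

definition cspan :: "'a::cstar_algebra set \<Rightarrow> 'a set" where
  "cspan S = {x. \<exists>F c. finite F \<and> F \<subseteq> S \<and> x = (\<Sum>s\<in>F. scaleC (c s) s)}"

definition clspan :: "'a::cstar_algebra set \<Rightarrow> 'a set" where
  "clspan S = closure (cspan S)"

definition setmul :: "'a::times set \<Rightarrow> 'a set \<Rightarrow> 'a set" where
  "setmul S T = {s * t | s t. s \<in> S \<and> t \<in> T}"

text \<open>Closed two-sided ideal generated by S: [ASA], with A = UNIV.\<close>
definition ideal_gen :: "'a::cstar_algebra set \<Rightarrow> 'a set" where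
  "ideal_gen S = clspan (setmul (setmul UNIV S) UNIV)"

definition annL :: "'a::{times,zero} set \<Rightarrow> 'a set" where
  "annL S = {x. \<forall>s\<in>S. x * s = 0}"

definition annR :: "'a::{times,zero} set \<Rightarrow> 'a set" where
  "annR S = {x. \<forall>s\<in>S. s * x = 0}"

definition invariant :: "'a::cstar_algebra set \<Rightarrow> bool" where
  "invariant S \<longleftrightarrow> clspan (setmul S UNIV) = clspan (setmul UNIV S)"

end

theory Submission
  imports Defs
begin

text \<open>A C*-algebra is semiprime: \<open>z A z = 0\<close> gives \<open>z z\<^sup>* z = 0\<close>, hence
  \<open>(z\<^sup>* z)\<^sup>2 = 0\<close> and \<open>z = 0\<close> by the C*-identity. Consequently \<open>x A y = 0\<close> iff
  \<open>y A x = 0\<close>, since \<open>(y b x) A (y b x) \<subseteq> y b (x A y) b x\<close>. Moreover \<open>x T A = 0\<close>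
  iff \<open>x T = 0\<close> (take \<open>a = (x t)\<^sup>*\<close>), and annihilators do not change under closed
  linear spans. Hence both annihilators of \<open>\<langle>S\<rangle> = [A S A]\<close> equal
  \<open>annL (A S) = annR (S A)\<close>, and invariance gives \<open>annL S = annL [S A] = annL [A S]\<close>,
  symmetrically for \<open>annR S\<close>.\<close>

lemma cstar_zero [simp]: "cstar (0::'a::cstar_algebra) = 0"
  using cstar_add[of "0::'a" 0] by simp

lemma scaleC_zero [simp]: "scaleC c (0::'a::cstar_algebra) = 0"
  using scaleC_add_right[of c "0::'a" 0] by simp

lemma cstar_mult_self_eq_zero: fixes x :: "'a::cstar_algebra"
  assumes "cstar x * x = 0" shows "x = 0"
proof -
  have "(norm x)\<^sup>2 = 0" using cstar_identity[of x] assms by simp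
  then show ?thesis by simp
qed

lemma mult_cstar_self_eq_zero: fixes x :: "'a::cstar_algebra"
  assumes "x * cstar x = 0" shows "x = 0"
proof -
  have "cstar x = 0"
    by (rule cstar_mult_self_eq_zero) (simp add: cstar_cstar assms)
  then show ?thesis by (metis cstar_cstar cstar_zero)
qed

lemma annL_UNIV: "annL (UNIV::'a::cstar_algebra set) = {0}"
proof -
  have "x = 0" if "\<forall>a. x * a = 0" for x :: 'a
    by (rule mult_cstar_self_eq_zero) (simp add: that)
  then show ?thesis unfolding annL_def by auto
qed

lemma annR_UNIV: "annR (UNIV::'a::cstar_algebra set) = {0}"
proof -
  have "x = 0" if "\<forall>a. a * x = 0" for x :: 'a
    by (rule cstar_mult_self_eq_zero) (simp add: that)
  then show ?thesis unfolding annR_def by auto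
qed

lemma semiprime: fixes z :: "'a::cstar_algebra"
  assumes "\<And>a. z * a * z = 0" shows "z = 0"
proof -
  let ?w = "cstar z * z"
  have "cstar ?w * ?w = cstar z * (z * cstar z * z)"
    by (simp add: cstar_mult cstar_cstar mult.assoc)
  also have "\<dots> = 0" using assms by simp
  finally have "?w = 0" by (rule cstar_mult_self_eq_zero)
  then show ?thesis by (rule cstar_mult_self_eq_zero)
qed

lemma sandwich_zero_swap: fixes x y :: "'a::cstar_algebra"
  assumes "\<And>a. x * a * y = 0" shows "y * b * x = 0"
proof (rule semiprime)
  fix a
  have "y * b * x * a * (y * b * x) = (y * b) * (x * a * y) * (b * x)"
    by (simp add: mult.assoc)
  then show "y * b * x * a * (y * b * x) = 0" using assms by simp
qed

lemma setmul_assoc: "setmul (setmul A B) C = setmul A (setmul B (C::'a::semigroup_mult set))"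
proof -
  have "x \<in> setmul (setmul A B) C \<longleftrightarrow> (\<exists>a\<in>A. \<exists>b\<in>B. \<exists>c\<in>C. x = a * b * c)"
    and "x \<in> setmul A (setmul B C) \<longleftrightarrow> (\<exists>a\<in>A. \<exists>b\<in>B. \<exists>c\<in>C. x = a * (b * c))" for x
    unfolding setmul_def by blast+
  then show ?thesis by (auto simp: mult.assoc)
qed

lemma annL_setmul_UNIV_right: "annL (setmul T UNIV) = annL (T::'a::cstar_algebra set)"
proof -
  have "x * t = 0 \<longleftrightarrow> (\<forall>a. x * (t * a) = 0)" for x t :: 'a
  proof -
    have "x * t = 0 \<longleftrightarrow> x * t \<in> annL UNIV" by (simp add: annL_UNIV)
    also have "\<dots> \<longleftrightarrow> (\<forall>a. x * (t * a) = 0)" by (simp add: annL_def mult.assoc)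
    finally show ?thesis .
  qed
  then show ?thesis unfolding annL_def setmul_def by blast
qed

lemma annR_setmul_UNIV_left: "annR (setmul UNIV T) = annR (T::'a::cstar_algebra set)"
proof -
  have "t * x = 0 \<longleftrightarrow> (\<forall>a. a * t * x = 0)" for x t :: 'a
  proof -
    have "t * x = 0 \<longleftrightarrow> t * x \<in> annR UNIV" by (simp add: annR_UNIV)
    also have "\<dots> \<longleftrightarrow> (\<forall>a. a * t * x = 0)" by (simp add: annR_def mult.assoc)
    finally show ?thesis .
  qed
  then show ?thesis unfolding annR_def setmul_def by blast
qed

lemma annL_setmul_UNIV_left_eq_annR:
  "annL (setmul UNIV S) = annR (setmul S (UNIV::'a::cstar_algebra set))"
proof -
  have "(\<forall>a. \<forall>s\<in>S. x * (a * s) = 0) \<longleftrightarrow> (\<forall>s\<in>S. \<forall>b. s * b * x = 0)" for x :: 'a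
  proof (intro iffI ballI allI)
    fix s b assume "\<forall>a. \<forall>s\<in>S. x * (a * s) = 0" "s \<in> S"
    then have "x * a * s = 0" for a by (simp add: mult.assoc)
    then show "s * b * x = 0" by (rule sandwich_zero_swap)
  next
    fix s a assume "\<forall>s\<in>S. \<forall>b. s * b * x = 0" "s \<in> S"
    then show "x * (a * s) = 0" using sandwich_zero_swap[of s x a] by (simp add: mult.assoc)
  qed
  then show ?thesis unfolding annL_def annR_def setmul_def by blast
qed

lemma clspan_subset_closed_subspace: fixes V :: "'a::cstar_algebra set"
  assumes "closed V" "0 \<in> V" "\<And>x y. x \<in> V \<Longrightarrow> y \<in> V \<Longrightarrow> x + y \<in> V"
    "\<And>c x. x \<in> V \<Longrightarrow> scaleC c x \<in> V" "T \<subseteq> V"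
  shows "clspan T \<subseteq> V"
proof -
  have "(\<Sum>s\<in>F. scaleC (c s) s) \<in> V" if "F \<subseteq> V" for F c
  proof (cases "finite F")
    case True
    then show ?thesis using that by (induction F) (auto intro: assms(2-4))
  qed (simp add: assms(2))
  then have "cspan T \<subseteq> V" using assms(5) unfolding cspan_def by blast
  then show ?thesis unfolding clspan_def using assms(1) by (rule closure_minimal)
qed

lemma subset_clspan: "T \<subseteq> clspan T"
proof
  fix y assume "y \<in> T"
  then have "y \<in> cspan T" unfolding cspan_def
    by (intro CollectI exI[of _ "{y}"] exI[of _ "\<lambda>_. 1"]) (simp add: scaleC_one)
  then show "y \<in> clspan T" unfolding clspan_def using closure_subset by blast
qed

lemma annL_clspan: "annL (clspan T) = annL (T::'a::cstar_algebra set)"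
proof
  show "annL T \<subseteq> annL (clspan T)"
  proof
    fix x assume "x \<in> annL T"
    then have "clspan T \<subseteq> {y. x * y = 0}"
      by (intro clspan_subset_closed_subspace closed_Collect_eq continuous_intros)
        (auto simp: annL_def distrib_left mult_scaleC_right)
    then show "x \<in> annL (clspan T)" unfolding annL_def by blast
  qed
qed (use subset_clspan in \<open>auto simp: annL_def\<close>)

lemma annR_clspan: "annR (clspan T) = annR (T::'a::cstar_algebra set)"
proof
  show "annR T \<subseteq> annR (clspan T)"
  proof
    fix x assume "x \<in> annR T"
    then have "clspan T \<subseteq> {y. y * x = 0}"
      by (intro clspan_subset_closed_subspace closed_Collect_eq continuous_intros)
        (auto simp: annR_def distrib_right mult_scaleC_left)
    then show "x \<in> annR (clspan T)" unfolding annR_def by blast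
  qed
qed (use subset_clspan in \<open>auto simp: annR_def\<close>)

theorem proposition2p5:
  fixes S :: "'a::cstar_algebra set"
  assumes "invariant S"
  shows "annL S = annR S \<and> annR S = annL (ideal_gen S) \<and> annL (ideal_gen S) = annR (ideal_gen S)"
proof -
  let ?AS = "setmul UNIV S" and ?SA = "setmul S UNIV"
  have span_eq: "clspan ?SA = clspan ?AS" using assms unfolding invariant_def .
  have "annL S = annL (clspan ?SA)" by (simp add: annL_clspan annL_setmul_UNIV_right)
  also have "\<dots> = annL ?AS" by (simp add: span_eq annL_clspan)
  finally have L: "annL S = annL ?AS" .
  have "annR S = annR (clspan ?AS)" by (simp add: annR_clspan annR_setmul_UNIV_left)
  also have "\<dots> = annR ?SA" by (simp flip: span_eq add: annR_clspan)
  finally have R: "annR S = annR ?SA" .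
  have IL: "annL (ideal_gen S) = annL ?AS"
    by (simp add: ideal_gen_def annL_clspan annL_setmul_UNIV_right)
  have IR: "annR (ideal_gen S) = annR ?SA"
    by (simp add: ideal_gen_def annR_clspan setmul_assoc annR_setmul_UNIV_left)
  show ?thesis using L R IL IR annL_setmul_UNIV_left_eq_annR[of S] by simp
qed

end
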